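(* Let $d\ge 1$, $\ell\in\{1,\dots,d\}$, and $\mu,\theta,\eta,k>0$. Consider a continuous-time Markov chain $(X(t),Z_1(t),Z_2(t))_{t\ge0}$ on $\mathbb{Z}_{\ge0}^d\times\mathbb{Z}_{\ge0}\times\mathbb{Z}_{\ge0}$, $X=(X_1,\dots,X_d)$, describing a stochastic reaction network on species $\mathbf{X}_1,\dots,\mathbf{X}_d$ (with arbitrary reactions whose stoichiometries involve only the species $\mathbf{X}_1,\dots,\mathbf{X}_d$ and whose propensities depend only on $X$) interconnected with the antithetic integral controller consisting of the reactions $$\emptyset\xrightarrow{\ \mu\ }\mathbf{Z}_1,\qquad \emptyset\xrightarrow{\ \theta X_\ell\ }\mathbf{Z}_2,\qquad \mathbf{Z}_1+\mathbf{Z}_2\xrightarrow{\ \eta Z_1Z_2\ }\emptyset,\qquad \emptyset\xrightarrow{\ kZ_1\ }\mathbf{X}_1,$$ and possibly additionally a feedback reaction $\emptyset\xrightarrow{F(X_\ell)}\mathbf{X}_1$ with a nonnegative propensity function $F$ (the labels over the arrows denote the propensities). Let $\mathcal{A}$ denote the generator of this chain and let $\pi$ be a stationary distribution of the chain such that all the expectations below are finite and $\mathbb{E}_\pi[\mathcal{A}f]=0$ for each of the functions $f\in\{z_1,\,z_2,\,z_1^2,\,z_2^2,\,(z_1-z_2)^2\}$. Then, regardless of the reactions and parameters of the controlled network, $$\mathrm{Cov}_\pi(X_\ell,Z_1-Z_2)=\frac{\mu}{\theta},\qquad \mathbb{E}_\pi[Z_1Z_2]=\frac{\mu}{\eta},$$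 $$\mathbb{E}_\pi[Z_1^2Z_2]=\frac{\mu}{\eta}\bigl(1+\mathbb{E}_\pi[Z_1]\bigr),\qquad \mathbb{E}_\pi[Z_1Z_2^2]=\frac{\mu+\theta\,\mathbb{E}_\pi[X_\ell Z_2]}{\eta}.$$
   Context: A reaction with propensity $\lambda(x,z)$ and stoichiometric (jump) vector $\zeta$ makes the Markov chain jump from state $(x,z)$ to $(x,z)+\zeta$ at rate $\lambda(x,z)$; the generator acts on functions $f$ by $(\mathcal{A}f)(x,z)=\sum_{\text{reactions}}\lambda(x,z)\bigl(f((x,z)+\zeta)-f(x,z)\bigr)$. $\mathbb{E}_\pi$ and $\mathrm{Cov}_\pi$ denote expectation and covariance under $\pi$. The paper states these identities "under the assumption that these invariants exist, i.e. they are finite"; the finiteness/stationary moment equation assumption above formalizes this. *)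

theory Defs
  imports "HOL-Probability.Probability"
begin

text \<open>States of the chain: (X, Z1, Z2) with X a vector of copy numbers indexed by
  the finite species type 'd (so d = CARD('d)).\<close>
type_synonym 'd state = "('d \<Rightarrow> nat) \<times> nat \<times> nat"
type_synonym 'd jump = "('d \<Rightarrow> int) \<times> int \<times> int"

type_synonym 'd reaction = "('d state \<Rightarrow> real) \<times> 'd jump"

definition shift :: "'d state \<Rightarrow> 'd jump \<Rightarrow> 'd state" where
  "shift s \<zeta> = ((\<lambda>i. nat (int (fst s i) + fst \<zeta> i)),
                 nat (int (fst (snd s)) + fst (snd \<zeta>)),
                 nat (int (snd (snd s)) + snd (snd \<zeta>)))"

definition generator :: "'d reaction list \<Rightarrow> ('d state \<Rightarrow> real) \<Rightarrow> 'd state \<Rightarrow> real" where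
  "generator R f s = (\<Sum>(lam, \<zeta>)\<leftarrow>R. lam s * (f (shift s \<zeta>) - f s))"

text \<open>Full reaction list: controlled network reactions (propensities depending on X
  only, stoichiometry on X only), antithetic integral controller, feedback F(X_l)
  into X_1 (F = 0 means no feedback).\<close>
definition full_reactions ::
  "((('d \<Rightarrow> nat) \<Rightarrow> real) \<times> ('d \<Rightarrow> int)) list \<Rightarrow> 'd \<Rightarrow> 'd \<Rightarrow>
   real \<Rightarrow> real \<Rightarrow> real \<Rightarrow> real \<Rightarrow> (nat \<Rightarrow> real) \<Rightarrow> 'd reaction list" where
  "full_reactions N i1 l \<mu> \<theta> \<eta> k F =
     map (\<lambda>(a, \<nu>). ((\<lambda>s. a (fst s)), (\<nu>, 0, 0))) N @
     [ ((\<lambda>s. \<mu>), (\<lambda>_. 0, 1, 0)),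
       ((\<lambda>s. \<theta> * real (fst s l)), (\<lambda>_. 0, 0, 1)),
       ((\<lambda>s. \<eta> * real (fst (snd s)) * real (snd (snd s))), (\<lambda>_. 0, -1, -1)),
       ((\<lambda>s. k * real (fst (snd s))), (\<lambda>i. if i = i1 then 1 else 0, 0, 0)),
       ((\<lambda>s. F (fst s l)), (\<lambda>i. if i = i1 then 1 else 0, 0, 0)) ]"

text \<open>Stationarity (global balance, pi Q = 0): for each state s,
  E_pi[A 1_{s}] = 0 (inflow into s equals outflow from s).\<close>
definition stationary :: "'d reaction list \<Rightarrow> 'd state pmf \<Rightarrow> bool" where
  "stationary R \<pi> \<longleftrightarrow> (\<forall>s. integrable (measure_pmf \<pi>) (generator R (\<lambda>x. indicator {s} x))
      \<and> measure_pmf.expectation \<pi> (generator R (\<lambda>x. indicator {s} x)) = 0)"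

definition cov_pmf :: "'a pmf \<Rightarrow> ('a \<Rightarrow> real) \<Rightarrow> ('a \<Rightarrow> real) \<Rightarrow> real" where
  "cov_pmf p f g = measure_pmf.expectation p (\<lambda>x. (f x - measure_pmf.expectation p f) *
                                                (g x - measure_pmf.expectation p g))"

definition zz1 :: "'d state \<Rightarrow> real" where "zz1 s = real (fst (snd s))"
definition zz2 :: "'d state \<Rightarrow> real" where "zz2 s = real (snd (snd s))"
definition xx :: "'d \<Rightarrow> 'd state \<Rightarrow> real" where "xx i s = real (fst s i)"

end

theory Submission
  imports Defs
begin

text \<open>Only the controller reactions move \<open>Z\<^sub>1\<close> and \<open>Z\<^sub>2\<close>, so the generator applied to
  a function of \<open>(z\<^sub>1, z\<^sub>2)\<close> sees the controlled network only through the production rate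
  \<open>\<theta> X\<^sub>l\<close> of \<open>Z\<^sub>2\<close>. The first two moment equations give \<open>E[Z\<^sub>1Z\<^sub>2] = \<mu>/\<eta>\<close> and
  \<open>E[X\<^sub>l] = \<mu>/\<theta>\<close>; the equations for \<open>z\<^sub>1\<^sup>2\<close> and \<open>z\<^sub>2\<^sup>2\<close> are linear in the third moments,
  and in the equation for \<open>(z\<^sub>1 - z\<^sub>2)\<^sup>2\<close> the annihilation terms cancel, leaving exactly the
  covariance of \<open>X\<^sub>l\<close> and \<open>Z\<^sub>1 - Z\<^sub>2\<close>.\<close>

lemma generator_full_reactions_controller:
  fixes g :: "real \<Rightarrow> real \<Rightarrow> real"
  shows "generator (full_reactions N i1 l \<mu> \<theta> \<eta> k F) (\<lambda>s. g (zz1 s) (zz2 s)) s =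
    \<mu> * (g (zz1 s + 1) (zz2 s) - g (zz1 s) (zz2 s))
  + \<theta> * xx l s * (g (zz1 s) (zz2 s + 1) - g (zz1 s) (zz2 s))
  + \<eta> * zz1 s * zz2 s * (g (zz1 s - 1) (zz2 s - 1) - g (zz1 s) (zz2 s))"
proof -
  obtain x a b where s: "s = (x, a, b)" by (cases s) auto
  have network: "(\<Sum>(lam, \<zeta>)\<leftarrow>map (\<lambda>(a, \<nu>). ((\<lambda>s. a (fst s)), (\<nu>, 0::int, 0::int))) N.
        lam s * ((\<lambda>s. g (zz1 s) (zz2 s)) (shift s \<zeta>) - g (zz1 s) (zz2 s))) = 0"
    by (induction N) (auto simp: shift_def zz1_def zz2_def)
  \<comment> \<open>The truncation in \<open>shift\<close> only matters when \<open>a = 0\<close> or \<open>b = 0\<close>, where the rate vanishes.\<close>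
  have annihilation:
    "\<eta> * real a * real b * (g (real (nat (int a - 1))) (real (nat (int b - 1))) - g a b)
     = \<eta> * real a * real b * (g (real a - 1) (real b - 1) - g a b)"
    by (cases "a = 0 \<or> b = 0") (auto simp: of_nat_diff)
  show ?thesis
    unfolding generator_def full_reactions_def
    using network annihilation by (simp add: s shift_def zz1_def zz2_def xx_def algebra_simps)
qed

lemma generator_zz1:
  "generator (full_reactions N i1 l \<mu> \<theta> \<eta> k F) zz1 = (\<lambda>s. \<mu> - \<eta> * (zz1 s * zz2 s))"
  using generator_full_reactions_controller[of N i1 l \<mu> \<theta> \<eta> k F "\<lambda>a b. a"] by (auto simp: algebra_simps)

lemma generator_zz2:
  "generator (full_reactions N i1 l \<mu> \<theta> \<eta> k F) zz2 =
     (\<lambda>s. \<theta> * xx l s - \<eta> * (zz1 s * zz2 s))"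
  using generator_full_reactions_controller[of N i1 l \<mu> \<theta> \<eta> k F "\<lambda>a b. b"] by (auto simp: algebra_simps)

lemma generator_zz1_square:
  "generator (full_reactions N i1 l \<mu> \<theta> \<eta> k F) (\<lambda>s. zz1 s ^ 2) =
     (\<lambda>s. 2 * \<mu> * zz1 s + \<mu> - 2 * \<eta> * (zz1 s ^ 2 * zz2 s) + \<eta> * (zz1 s * zz2 s))"
  using generator_full_reactions_controller[of N i1 l \<mu> \<theta> \<eta> k F "\<lambda>a b. a ^ 2"]
  by (auto simp: algebra_simps power2_eq_square)

lemma generator_zz2_square:
  "generator (full_reactions N i1 l \<mu> \<theta> \<eta> k F) (\<lambda>s. zz2 s ^ 2) =
     (\<lambda>s. 2 * \<theta> * (xx l s * zz2 s) + \<theta> * xx l s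
          - 2 * \<eta> * (zz1 s * zz2 s ^ 2) + \<eta> * (zz1 s * zz2 s))"
  using generator_full_reactions_controller[of N i1 l \<mu> \<theta> \<eta> k F "\<lambda>a b. b ^ 2"]
  by (auto simp: algebra_simps power2_eq_square)

lemma generator_zz_diff_square:
  "generator (full_reactions N i1 l \<mu> \<theta> \<eta> k F) (\<lambda>s. (zz1 s - zz2 s) ^ 2) =
     (\<lambda>s. 2 * \<mu> * zz1 s - 2 * \<mu> * zz2 s + \<mu>
          - 2 * \<theta> * (xx l s * zz1 s) + 2 * \<theta> * (xx l s * zz2 s) + \<theta> * xx l s)"
  using generator_full_reactions_controller[of N i1 l \<mu> \<theta> \<eta> k F "\<lambda>a b. (a - b) ^ 2"]
  by (auto simp: algebra_simps power2_eq_square)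

lemma cov_pmf_eq:
  fixes f g :: "'a \<Rightarrow> real"
  assumes "integrable (measure_pmf p) f" "integrable (measure_pmf p) g"
    and "integrable (measure_pmf p) (\<lambda>x. f x * g x)"
  shows "cov_pmf p f g = measure_pmf.expectation p (\<lambda>x. f x * g x)
           - measure_pmf.expectation p f * measure_pmf.expectation p g"
proof -
  let ?E = "measure_pmf.expectation p"
  have "cov_pmf p f g = ?E (\<lambda>x. f x * g x - ?E f * g x - ?E g * f x + ?E f * ?E g)"
    unfolding cov_pmf_def by (intro Bochner_Integration.integral_cong refl) (simp add: algebra_simps)
  also have "\<dots> = ?E (\<lambda>x. f x * g x) - ?E f * ?E g"
    using assms by simp
  finally show ?thesis .
qed

locale antithetic_moment_equations =
  fixes N :: "(((('d::finite) \<Rightarrow> nat) \<Rightarrow> real) \<times> ('d \<Rightarrow> int)) list"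
    and i1 l :: 'd
    and \<mu> \<theta> \<eta> k :: real
    and F :: "nat \<Rightarrow> real"
    and \<pi> :: "'d state pmf"
  assumes theta_pos: "\<theta> > 0" and eta_pos: "\<eta> > 0"
    and integrable_moments:
      "\<And>f. f \<in> {xx l, zz1, zz2, \<lambda>s. xx l s * zz1 s, \<lambda>s. xx l s * zz2 s,
               \<lambda>s. zz1 s * zz2 s, \<lambda>s. zz1 s ^ 2, \<lambda>s. zz2 s ^ 2,
               \<lambda>s. zz1 s ^ 2 * zz2 s, \<lambda>s. zz1 s * zz2 s ^ 2}
         \<Longrightarrow> integrable (measure_pmf \<pi>) f"
    and expectation_generator:
      "\<And>f. f \<in> {zz1, zz2, \<lambda>s. zz1 s ^ 2, \<lambda>s. zz2 s ^ 2, \<lambda>s. (zz1 s - zz2 s) ^ 2}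
         \<Longrightarrow> integrable (measure_pmf \<pi>) (generator (full_reactions N i1 l \<mu> \<theta> \<eta> k F) f)
           \<and> measure_pmf.expectation \<pi> (generator (full_reactions N i1 l \<mu> \<theta> \<eta> k F) f) = 0"
begin

abbreviation E :: "('d state \<Rightarrow> real) \<Rightarrow> real" where
  "E \<equiv> measure_pmf.expectation \<pi>"

lemma integrable_xx: "integrable (measure_pmf \<pi>) (xx l)"
  and integrable_zz1: "integrable (measure_pmf \<pi>) zz1"
  and integrable_zz2: "integrable (measure_pmf \<pi>) zz2"
  and integrable_xx_zz1: "integrable (measure_pmf \<pi>) (\<lambda>s. xx l s * zz1 s)"
  and integrable_xx_zz2: "integrable (measure_pmf \<pi>) (\<lambda>s. xx l s * zz2 s)"
  and integrable_zz1_zz2: "integrable (measure_pmf \<pi>) (\<lambda>s. zz1 s * zz2 s)"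
  and integrable_zz1_sq_zz2: "integrable (measure_pmf \<pi>) (\<lambda>s. zz1 s ^ 2 * zz2 s)"
  and integrable_zz1_zz2_sq: "integrable (measure_pmf \<pi>) (\<lambda>s. zz1 s * zz2 s ^ 2)"
  by (auto intro: integrable_moments)

lemma expectation_zz1_zz2: "E (\<lambda>s. zz1 s * zz2 s) = \<mu> / \<eta>"
proof -
  have "\<mu> - \<eta> * E (\<lambda>s. zz1 s * zz2 s) = 0"
    using expectation_generator[of zz1] integrable_zz1_zz2 by (simp add: generator_zz1)
  then show ?thesis using eta_pos by (simp add: field_simps)
qed

lemma expectation_xx: "E (xx l) = \<mu> / \<theta>"
proof -
  have "\<theta> * E (xx l) - \<eta> * E (\<lambda>s. zz1 s * zz2 s) = 0"
    using expectation_generator[of zz2] integrable_zz1_zz2 integrable_xx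
    by (simp add: generator_zz2)
  then show ?thesis using expectation_zz1_zz2 theta_pos eta_pos by (simp add: field_simps)
qed

lemma expectation_zz1_sq_zz2: "E (\<lambda>s. zz1 s ^ 2 * zz2 s) = \<mu> / \<eta> * (1 + E zz1)"
proof -
  have "2 * \<mu> * E zz1 + \<mu> - 2 * \<eta> * E (\<lambda>s. zz1 s ^ 2 * zz2 s)
          + \<eta> * E (\<lambda>s. zz1 s * zz2 s) = 0"
    using expectation_generator[of "\<lambda>s. zz1 s ^ 2"]
      integrable_zz1_zz2 integrable_zz1 integrable_zz1_sq_zz2
    by (simp add: generator_zz1_square)
  then show ?thesis using expectation_zz1_zz2 eta_pos by (simp add: field_simps)
qed

lemma expectation_zz1_zz2_sq:
  "E (\<lambda>s. zz1 s * zz2 s ^ 2) = (\<mu> + \<theta> * E (\<lambda>s. xx l s * zz2 s)) / \<eta>"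
proof -
  have "2 * \<theta> * E (\<lambda>s. xx l s * zz2 s) + \<theta> * E (xx l)
          - 2 * \<eta> * E (\<lambda>s. zz1 s * zz2 s ^ 2) + \<eta> * E (\<lambda>s. zz1 s * zz2 s) = 0"
    using expectation_generator[of "\<lambda>s. zz2 s ^ 2"]
      integrable_zz1_zz2 integrable_xx integrable_xx_zz2 integrable_zz1_zz2_sq
    by (simp add: generator_zz2_square)
  then show ?thesis
    using expectation_zz1_zz2 expectation_xx theta_pos eta_pos by (simp add: field_simps)
qed

lemma cov_xx_zz_diff: "cov_pmf \<pi> (xx l) (\<lambda>s. zz1 s - zz2 s) = \<mu> / \<theta>"
proof -
  have diff_eq: "2 * \<mu> * E zz1 - 2 * \<mu> * E zz2 + \<mu> - 2 * \<theta> * E (\<lambda>s. xx l s * zz1 s)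
          + 2 * \<theta> * E (\<lambda>s. xx l s * zz2 s) + \<theta> * E (xx l) = 0"
    using expectation_generator[of "\<lambda>s. (zz1 s - zz2 s) ^ 2"] integrable_zz1 integrable_zz2
      integrable_xx integrable_xx_zz1 integrable_xx_zz2
    by (simp add: generator_zz_diff_square)
  have mixed: "(\<lambda>s. xx l s * (zz1 s - zz2 s)) = (\<lambda>s. xx l s * zz1 s - xx l s * zz2 s)"
    by (simp add: algebra_simps)
  have "cov_pmf \<pi> (xx l) (\<lambda>s. zz1 s - zz2 s)
        = E (\<lambda>s. xx l s * zz1 s) - E (\<lambda>s. xx l s * zz2 s) - E (xx l) * (E zz1 - E zz2)"
    using integrable_xx integrable_zz1 integrable_zz2 integrable_xx_zz1 integrable_xx_zz2
    by (subst cov_pmf_eq) (auto simp: mixed)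
  then show ?thesis using diff_eq expectation_xx theta_pos by (simp add: field_simps)
qed

end

theorem mainTheorem1:
  fixes N :: "(((('d::finite) \<Rightarrow> nat) \<Rightarrow> real) \<times> ('d \<Rightarrow> int)) list"
    and i1 l :: 'd
    and \<mu> \<theta> \<eta> k :: real
    and F :: "nat \<Rightarrow> real"
    and \<pi> :: "'d state pmf"
  defines "R \<equiv> full_reactions N i1 l \<mu> \<theta> \<eta> k F"
  defines "E \<equiv> measure_pmf.expectation \<pi>"
  assumes pos: "\<mu> > 0" "\<theta> > 0" "\<eta> > 0" "k > 0"
    and F_nonneg: "\<And>n. F n \<ge> 0"
    and N_nonneg: "\<And>a \<nu> x. (a, \<nu>) \<in> set N \<Longrightarrow> a x \<ge> 0"
    and N_ok: "\<And>a \<nu> x. (a, \<nu>) \<in> set N \<Longrightarrow> a x > 0 \<Longrightarrow> (\<forall>i. int (x i) + \<nu> i \<ge> 0)"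
    and stat: "stationary R \<pi>"
    and int_fin: "\<And>f. f \<in> {xx l, zz1, zz2, \<lambda>s. xx l s * zz1 s, \<lambda>s. xx l s * zz2 s,
                         \<lambda>s. zz1 s * zz2 s, \<lambda>s. zz1 s ^ 2, \<lambda>s. zz2 s ^ 2,
                         \<lambda>s. zz1 s ^ 2 * zz2 s, \<lambda>s. zz1 s * zz2 s ^ 2}
                   \<Longrightarrow> integrable (measure_pmf \<pi>) f"
    and moment_eqs: "\<And>f. f \<in> {zz1, zz2, \<lambda>s. zz1 s ^ 2, \<lambda>s. zz2 s ^ 2, \<lambda>s. (zz1 s - zz2 s) ^ 2}
                   \<Longrightarrow> integrable (measure_pmf \<pi>) (generator R f) \<and> E (generator R f) = 0"
  shows "cov_pmf \<pi> (xx l) (\<lambda>s. zz1 s - zz2 s) = \<mu> / \<theta>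
    \<and> E (\<lambda>s. zz1 s * zz2 s) = \<mu> / \<eta>
    \<and> E (\<lambda>s. zz1 s ^ 2 * zz2 s) = \<mu> / \<eta> * (1 + E zz1)
    \<and> E (\<lambda>s. zz1 s * zz2 s ^ 2) = (\<mu> + \<theta> * E (\<lambda>s. xx l s * zz2 s)) / \<eta>"
proof -
  interpret antithetic_moment_equations N i1 l \<mu> \<theta> \<eta> k F \<pi>
    using pos(2,3) int_fin moment_eqs unfolding R_def E_def by unfold_locales auto
  show ?thesis
    unfolding E_def
    using cov_xx_zz_diff expectation_zz1_zz2 expectation_zz1_sq_zz2 expectation_zz1_zz2_sq
    by blast
qed

end
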